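(* Let $\langle X,d\rangle$ be a metric space. The following are equivalent: (1) $X$ is cofinally Bourbaki quasi-complete; (2) $X$ is cofinally Bourbaki complete and every CBC-regular function from $X$ to any metric space $Y$ maps cofinally Bourbaki quasi-Cauchy sequences to cofinally Bourbaki-Cauchy sequences; (3) $X$ is cofinally Bourbaki complete and every real-valued CBC-regular function on $X$ maps cofinally Bourbaki quasi-Cauchy sequences to cofinally Bourbaki-Cauchy sequences; (4) $X$ is cofinally Bourbaki complete and every cofinally Bourbaki quasi-Cauchy sequence in $X$ is cofinally Bourbaki-Cauchy.
   Context: For $\varepsilon>0$, an $\varepsilon$-chain joining $x,y$ is a finite sequence $x=x_0,\dots,x_n=y$ with consecutive distances $<\varepsilon$. A sequence $\langle x_n\rangle$ is cofinally Bourbaki quasi-Cauchy if for every $\varepsilon>0$ there is an infinite $N_\varepsilon\subseteq\mathbb{N}$ such that any $x_j,x_k$ with $j,k\in N_\varepsilon$ can be joined by an $\varepsilon$-chain; $X$ is cofinally Bourbaki quasi-complete if every such sequence has a cluster point. In a metric space $\langle Y,\rho\rangle$ let $S^1_\rho(p,\varepsilon)$ be the open $\varepsilon$-ball about $p$ and $S^{m}_\rho(p,\varepsilon)=\{y:\rho(y,S^{m-1}_\rho(p,\varepsilon))<\varepsilon\}$; a sequence $\langle y_n\rangle$ is cofinally Bourbaki-Cauchy if for every $\varepsilon>0$ there exist an infinite $N_\varepsilon\subseteq\mathbb{N}$, $m\in\mathbb{N}$, $p\in Y$ with $y_n\in S^m_\rho(p,\varepsilon)$ for all $n\in N_\varepsilon$.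 A space is cofinally Bourbaki complete if every cofinally Bourbaki-Cauchy sequence has a cluster point. A function between metric spaces is CBC-regular if it maps cofinally Bourbaki-Cauchy sequences to cofinally Bourbaki-Cauchy sequences. *)

theory Defs
  imports "HOL-Analysis.Analysis"
begin

text \<open>Metric spaces are given as a carrier M with a distance d satisfying
  the library predicate Metric_space M d.\<close>

definition eps_chain :: "'a set \<Rightarrow> ('a \<Rightarrow> 'a \<Rightarrow> real) \<Rightarrow> real \<Rightarrow> 'a \<Rightarrow> 'a \<Rightarrow> bool" where
  "eps_chain M d e x y \<longleftrightarrow>
     (\<exists>xs. xs \<noteq> [] \<and> hd xs = x \<and> last xs = y \<and> set xs \<subseteq> M \<and>
           (\<forall>i. Suc i < length xs \<longrightarrow> d (xs ! i) (xs ! Suc i) < e))"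

definition cofinally_Bourbaki_quasi_Cauchy :: "'a set \<Rightarrow> ('a \<Rightarrow> 'a \<Rightarrow> real) \<Rightarrow> (nat \<Rightarrow> 'a) \<Rightarrow> bool" where
  "cofinally_Bourbaki_quasi_Cauchy M d s \<longleftrightarrow> range s \<subseteq> M \<and>
     (\<forall>e>0. \<exists>N::nat set. infinite N \<and> (\<forall>j\<in>N. \<forall>k\<in>N. eps_chain M d e (s j) (s k)))"

definition seq_cluster_point :: "'a set \<Rightarrow> ('a \<Rightarrow> 'a \<Rightarrow> real) \<Rightarrow> (nat \<Rightarrow> 'a) \<Rightarrow> 'a \<Rightarrow> bool" where
  "seq_cluster_point M d s p \<longleftrightarrow> p \<in> M \<and> (\<forall>e>0. infinite {n. d (s n) p < e})"

definition cofinally_Bourbaki_quasi_complete :: "'a set \<Rightarrow> ('a \<Rightarrow> 'a \<Rightarrow> real) \<Rightarrow> bool" where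
  "cofinally_Bourbaki_quasi_complete M d \<longleftrightarrow>
     (\<forall>s. cofinally_Bourbaki_quasi_Cauchy M d s \<longrightarrow> (\<exists>p. seq_cluster_point M d s p))"

text \<open>Siter M d p e m is S^m(p,e); Siter 0 = {p}, so Siter 1 is the open e-ball.\<close>
primrec Siter :: "'a set \<Rightarrow> ('a \<Rightarrow> 'a \<Rightarrow> real) \<Rightarrow> 'a \<Rightarrow> real \<Rightarrow> nat \<Rightarrow> 'a set" where
  "Siter M d p e 0 = {p}"
| "Siter M d p e (Suc m) = {y \<in> M. \<exists>z \<in> Siter M d p e m. d y z < e}"

definition cofinally_Bourbaki_Cauchy :: "'a set \<Rightarrow> ('a \<Rightarrow> 'a \<Rightarrow> real) \<Rightarrow> (nat \<Rightarrow> 'a) \<Rightarrow> bool" where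
  "cofinally_Bourbaki_Cauchy M d s \<longleftrightarrow> range s \<subseteq> M \<and>
     (\<forall>e>0. \<exists>N::nat set. \<exists>m::nat. \<exists>p\<in>M. infinite N \<and> m \<ge> 1 \<and>
         (\<forall>n\<in>N. s n \<in> Siter M d p e m))"

definition cofinally_Bourbaki_complete :: "'a set \<Rightarrow> ('a \<Rightarrow> 'a \<Rightarrow> real) \<Rightarrow> bool" where
  "cofinally_Bourbaki_complete M d \<longleftrightarrow>
     (\<forall>s. cofinally_Bourbaki_Cauchy M d s \<longrightarrow> (\<exists>p. seq_cluster_point M d s p))"

definition CBC_regular :: "'a set \<Rightarrow> ('a \<Rightarrow> 'a \<Rightarrow> real) \<Rightarrow> 'b set \<Rightarrow> ('b \<Rightarrow> 'b \<Rightarrow> real) \<Rightarrow> ('a \<Rightarrow> 'b) \<Rightarrow> bool" where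
  "CBC_regular M d Y dY f \<longleftrightarrow> f ` M \<subseteq> Y \<and>
     (\<forall>s. cofinally_Bourbaki_Cauchy M d s \<longrightarrow> cofinally_Bourbaki_Cauchy Y dY (f \<circ> s))"

text \<open>Condition (2), with the target spaces ranging over metric spaces whose points have type 'b.\<close>
definition cond2 :: "'b itself \<Rightarrow> 'a set \<Rightarrow> ('a \<Rightarrow> 'a \<Rightarrow> real) \<Rightarrow> bool" where
  "cond2 _ X d \<longleftrightarrow> cofinally_Bourbaki_complete X d \<and>
     (\<forall>(Y::'b set) dY (f::'a \<Rightarrow> 'b). Metric_space Y dY \<and> CBC_regular X d Y dY f \<longrightarrow>
        (\<forall>s. cofinally_Bourbaki_quasi_Cauchy X d s \<longrightarrow> cofinally_Bourbaki_Cauchy Y dY (f \<circ> s)))"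

end

theory Submission
  imports Defs
begin

text \<open>A sequence with a cluster point is cofinally Bourbaki-Cauchy, and cofinally
  Bourbaki-Cauchy sequences are cofinally Bourbaki quasi-Cauchy; this gives everything
  except that (3) implies (1). For that, let s be a quasi-Cauchy sequence without
  cluster point and let h x = inf {d x (s n) + 1/(n+1) | n}, the penalized distance
  below. No point of X is a cluster point, so h is bounded away from 0 near every point,
  and 1/h is bounded on an infinite part of every sequence having a cluster point. In a
  normed space being cofinally Bourbaki-Cauchy just means having a bounded subsequence,
  so by completeness 1/h is CBC-regular. But 1/h (s n) \<ge> n+1, so 1/h \<circ> s is not
  cofinally Bourbaki-Cauchy.\<close>

lemma eps_chain_iff_successively:
  "eps_chain M d e x y \<longleftrightarrow>
     (\<exists>xs. xs \<noteq> [] \<and> hd xs = x \<and> last xs = y \<and> set xs \<subseteq> M \<and>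
           successively (\<lambda>a b. d a b < e) xs)"
  unfolding eps_chain_def successively_conv_nth ..

lemma eps_chain_refl: "x \<in> M \<Longrightarrow> eps_chain M d e x x"
  unfolding eps_chain_iff_successively by (intro exI[of _ "[x]"]) auto

lemma eps_chain_Cons:
  assumes "y \<in> M" "d y z < e" "eps_chain M d e z w"
  shows "eps_chain M d e y w"
proof -
  obtain xs where "xs \<noteq> []" "hd xs = z" "last xs = w" "set xs \<subseteq> M"
    "successively (\<lambda>a b. d a b < e) xs"
    using assms(3) unfolding eps_chain_iff_successively by blast
  with assms(1,2) show ?thesis
    unfolding eps_chain_iff_successively
    by (intro exI[of _ "y # xs"]) (auto simp: successively_Cons)
qed

lemma eps_chain_trans:
  assumes "eps_chain M d e x y" "eps_chain M d e y w"
  shows "eps_chain M d e x w"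
proof -
  obtain xs where xs: "xs \<noteq> []" "hd xs = x" "last xs = y" "set xs \<subseteq> M"
    "successively (\<lambda>a b. d a b < e) xs"
    using assms(1) unfolding eps_chain_iff_successively by blast
  obtain ys where ys: "y # ys \<noteq> []" "last (y # ys) = w" "set (y # ys) \<subseteq> M"
    "successively (\<lambda>a b. d a b < e) (y # ys)"
    using assms(2) unfolding eps_chain_iff_successively by (metis list.collapse)
  have "successively (\<lambda>a b. d a b < e) (xs @ ys)"
    using xs ys by (auto simp: successively_append_iff successively_Cons)
  with xs ys show ?thesis
    unfolding eps_chain_iff_successively by (intro exI[of _ "xs @ ys"]) auto
qed

context Metric_space
begin

lemma eps_chain_sym:
  assumes "eps_chain M d e x y"
  shows "eps_chain M d e y x"
proof -
  obtain xs where xs: "xs \<noteq> []" "hd xs = x" "last xs = y" "set xs \<subseteq> M"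
    "successively (\<lambda>a b. d a b < e) xs"
    using assms unfolding eps_chain_iff_successively by blast
  then have "successively (\<lambda>a b. d a b < e) (rev xs)"
    by (auto simp: commute elim: successively_mono)
  with xs show ?thesis
    unfolding eps_chain_iff_successively
    by (intro exI[of _ "rev xs"]) (auto simp: hd_rev last_rev)
qed

lemma Siter_subset: "p \<in> M \<Longrightarrow> Siter M d p e m \<subseteq> M"
  by (cases m) auto

lemma Siter_imp_eps_chain: "p \<in> M \<Longrightarrow> y \<in> Siter M d p e m \<Longrightarrow> eps_chain M d e y p"
proof (induction m arbitrary: y)
  case 0
  then show ?case by (simp add: eps_chain_refl)
next
  case (Suc m)
  then show ?case by (auto intro: eps_chain_Cons)
qed

lemma Siter_dist_le: "p \<in> M \<Longrightarrow> y \<in> Siter M d p e m \<Longrightarrow> d y p \<le> real m * e"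
proof (induction m arbitrary: y)
  case 0
  then show ?case by simp
next
  case (Suc m)
  then obtain z where z: "y \<in> M" "z \<in> Siter M d p e m" "d y z < e" by auto
  with Suc.prems(1) have "d y p \<le> d y z + d z p"
    using Siter_subset triangle by blast
  with z Suc show ?case by (fastforce simp: algebra_simps)
qed

end

lemma ball_subset_Siter:
  fixes p :: "'a::real_normed_vector"
  shows "ball p (real (Suc m) * e) \<subseteq> Siter UNIV dist p e (Suc m)"
proof (induction m)
  case 0
  then show ?case by (auto simp: dist_commute)
next
  case (Suc m)
  show ?case
  proof
    fix y assume "y \<in> ball p (real (Suc (Suc m)) * e)"
    then have y: "norm (y - p) < (real m + 2) * e"
      by (simp add: dist_norm norm_minus_commute algebra_simps)
    define t where "t = (real m + 1) / (real m + 2)"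
    define z where "z = p + t *\<^sub>R (y - p)"
    have "dist p z = t * norm (y - p)"
      by (simp add: z_def dist_norm t_def)
    also have "\<dots> < t * ((real m + 2) * e)"
      using y by (intro mult_strict_left_mono) (auto simp: t_def)
    also have "\<dots> = real (Suc m) * e"
      by (simp add: t_def)
    finally have "z \<in> Siter UNIV dist p e (Suc m)"
      using Suc.IH by auto
    have "y - z = (y - p) - t *\<^sub>R (y - p)"
      by (simp add: z_def algebra_simps)
    also have "\<dots> = (1 - t) *\<^sub>R (y - p)"
      by (simp add: scaleR_diff_left)
    also have "1 - t = 1 / (real m + 2)"
      by (simp add: t_def field_simps)
    finally have "y - z = (1 / (real m + 2)) *\<^sub>R (y - p)" .
    then have "dist y z = norm (y - p) / (real m + 2)"
      by (simp add: dist_norm)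
    then have "dist y z < e"
      using y by (simp add: pos_divide_less_eq mult.commute)
    with \<open>z \<in> Siter UNIV dist p e (Suc m)\<close> show "y \<in> Siter UNIV dist p e (Suc (Suc m))"
      by auto
  qed
qed

lemma cofinally_Bourbaki_Cauchy_normed_iff:
  fixes s :: "nat \<Rightarrow> 'a::real_normed_vector"
  shows "cofinally_Bourbaki_Cauchy UNIV dist s \<longleftrightarrow> (\<exists>B. infinite {n. norm (s n) \<le> B})"
proof
  assume "cofinally_Bourbaki_Cauchy UNIV dist s"
  then obtain N m p where N: "infinite N" "\<forall>n\<in>N. s n \<in> Siter UNIV dist p 1 m"
    unfolding cofinally_Bourbaki_Cauchy_def using zero_less_one by blast
  have "norm (s n) \<le> norm p + real m" if "n \<in> N" for n
    using Met_TC.Siter_dist_le[of p "s n" 1 m] N(2) that norm_triangle_ineq2[of "s n" p]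
    by (simp add: dist_norm)
  then have "N \<subseteq> {n. norm (s n) \<le> norm p + real m}" by blast
  with N(1) show "\<exists>B. infinite {n. norm (s n) \<le> B}"
    using finite_subset by blast
next
  assume "\<exists>B. infinite {n. norm (s n) \<le> B}"
  then obtain B where B: "infinite {n. norm (s n) \<le> B}" ..
  show "cofinally_Bourbaki_Cauchy UNIV dist s"
    unfolding cofinally_Bourbaki_Cauchy_def
  proof (intro conjI allI impI)
    fix e :: real assume "e > 0"
    then obtain m where "B < real m * e"
      using reals_Archimedean3 by blast
    have "s n \<in> Siter UNIV dist 0 e (Suc m)" if "norm (s n) \<le> B" for n
    proof -
      have "s n \<in> ball 0 (real (Suc m) * e)"
        using that \<open>B < real m * e\<close> \<open>e > 0\<close> by (simp add: distrib_right)
      then show ?thesis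
        using ball_subset_Siter by blast
    qed
    with B show "\<exists>N m. \<exists>p\<in>UNIV. infinite N \<and> 1 \<le> m \<and> (\<forall>n\<in>N. s n \<in> Siter UNIV dist p e m)"
      by (intro exI[of _ "{n. norm (s n) \<le> B}"] exI[of _ "Suc m"] bexI[of _ 0]) auto
  qed simp
qed

lemma (in Metric_space) cofinally_Bourbaki_Cauchy_imp_quasi_Cauchy:
  assumes "cofinally_Bourbaki_Cauchy M d s"
  shows "cofinally_Bourbaki_quasi_Cauchy M d s"
proof -
  have "\<exists>N. infinite N \<and> (\<forall>j\<in>N. \<forall>k\<in>N. eps_chain M d e (s j) (s k))" if "e > 0" for e
  proof -
    obtain N m p where N: "p \<in> M" "infinite N" "\<forall>n\<in>N. s n \<in> Siter M d p e m"
      using assms \<open>e > 0\<close> unfolding cofinally_Bourbaki_Cauchy_def by meson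
    have "eps_chain M d e (s j) (s k)" if "j \<in> N" "k \<in> N" for j k
      using N that
      by (auto intro!: eps_chain_trans[OF Siter_imp_eps_chain eps_chain_sym[OF Siter_imp_eps_chain]])
    with N(2) show ?thesis by blast
  qed
  with assms show ?thesis
    unfolding cofinally_Bourbaki_quasi_Cauchy_def cofinally_Bourbaki_Cauchy_def by blast
qed

lemma seq_cluster_point_imp_cofinally_Bourbaki_Cauchy:
  assumes "range s \<subseteq> M" "seq_cluster_point M d s p"
  shows "cofinally_Bourbaki_Cauchy M d s"
  unfolding cofinally_Bourbaki_Cauchy_def
proof (intro conjI allI impI)
  fix e :: real assume "e > 0"
  with assms(2) have "p \<in> M" "infinite {n. d (s n) p < e}"
    unfolding seq_cluster_point_def by auto
  with assms(1) show "\<exists>N m. \<exists>p\<in>M. infinite N \<and> 1 \<le> m \<and> (\<forall>n\<in>N. s n \<in> Siter M d p e m)"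
    by (intro exI[of _ "{n. d (s n) p < e}"] exI[of _ "1::nat"] bexI[of _ p]) auto
qed (use assms in simp)

lemma (in Metric_space) cofinally_Bourbaki_quasi_complete_imp_complete:
  assumes "cofinally_Bourbaki_quasi_complete M d"
  shows "cofinally_Bourbaki_complete M d"
  unfolding cofinally_Bourbaki_complete_def
proof (intro allI impI)
  fix s assume "cofinally_Bourbaki_Cauchy M d s"
  then have "cofinally_Bourbaki_quasi_Cauchy M d s"
    by (rule cofinally_Bourbaki_Cauchy_imp_quasi_Cauchy)
  with assms show "\<exists>p. seq_cluster_point M d s p"
    unfolding cofinally_Bourbaki_quasi_complete_def by simp
qed

lemma cofinally_Bourbaki_quasi_complete_imp_Cauchy:
  assumes "cofinally_Bourbaki_quasi_complete M d" "cofinally_Bourbaki_quasi_Cauchy M d s"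
  shows "cofinally_Bourbaki_Cauchy M d s"
proof -
  obtain p where "seq_cluster_point M d s p"
    using assms unfolding cofinally_Bourbaki_quasi_complete_def by blast
  moreover have "range s \<subseteq> M"
    using assms(2) unfolding cofinally_Bourbaki_quasi_Cauchy_def by simp
  ultimately show ?thesis
    by (intro seq_cluster_point_imp_cofinally_Bourbaki_Cauchy)
qed

lemma cofinally_Bourbaki_quasi_complete_if_complete_and_Cauchy:
  assumes "cofinally_Bourbaki_complete M d"
    and "\<forall>s. cofinally_Bourbaki_quasi_Cauchy M d s \<longrightarrow> cofinally_Bourbaki_Cauchy M d s"
  shows "cofinally_Bourbaki_quasi_complete M d"
  using assms
  unfolding cofinally_Bourbaki_quasi_complete_def cofinally_Bourbaki_complete_def
  by simp

definition penalized_dist :: "('a \<Rightarrow> 'a \<Rightarrow> real) \<Rightarrow> (nat \<Rightarrow> 'a) \<Rightarrow> 'a \<Rightarrow> real" where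
  "penalized_dist d s x = (INF n. d x (s n) + 1 / real (Suc n))"

context Metric_space
begin

lemma penalized_dist_le: "penalized_dist d s x \<le> d x (s n) + 1 / real (Suc n)"
  unfolding penalized_dist_def
  by (rule cINF_lower) (auto intro: bdd_belowI2[where m = 0] add_nonneg_nonneg)

lemma penalized_dist_seq_le: "s n \<in> M \<Longrightarrow> penalized_dist d s (s n) \<le> 1 / real (Suc n)"
  using penalized_dist_le[of s "s n" n] by simp

lemma penalized_dist_bounded_below_near:
  assumes "range s \<subseteq> M" "q \<in> M" "\<not> seq_cluster_point M d s q"
  obtains c where "c > 0" "\<And>x. x \<in> M \<Longrightarrow> d x q < c \<Longrightarrow> c \<le> penalized_dist d s x"
proof -
  obtain \<epsilon> where "\<epsilon> > 0" "finite {n. d (s n) q < \<epsilon>}"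
    using assms(2,3) unfolding seq_cluster_point_def by auto
  then obtain K where K: "\<And>n. d (s n) q < \<epsilon> \<Longrightarrow> n < K"
    using finite_nat_bounded by blast
  define c where "c = min (\<epsilon> / 2) (1 / real (Suc K))"
  have "c \<le> penalized_dist d s x" if x: "x \<in> M" "d x q < c" for x
    unfolding penalized_dist_def
  proof (rule cINF_greatest)
    fix n
    show "c \<le> d x (s n) + 1 / real (Suc n)"
    proof (cases "d (s n) q < \<epsilon>")
      case True
      then have "n < K"
        by (rule K)
      then have "1 / real (Suc K) \<le> 1 / real (Suc n)"
        by (intro divide_left_mono) auto
      then show ?thesis
        unfolding c_def using nonneg[of x "s n"] by linarith
    next
      case False
      have "d q (s n) \<le> d q x + d x (s n)"
        using triangle assms(1,2) x(1) by blast
      moreover have "0 < 1 / real (Suc n)"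
        by simp
      ultimately show ?thesis
        using False x(2) commute[of q "s n"] commute[of q x] unfolding c_def by linarith
    qed
  qed simp
  moreover have "c > 0"
    unfolding c_def using \<open>\<epsilon> > 0\<close> by simp
  ultimately show thesis
    using that by blast
qed

lemma penalized_dist_pos:
  assumes "range s \<subseteq> M" "x \<in> M" "\<not> seq_cluster_point M d s x"
  shows "0 < penalized_dist d s x"
proof -
  obtain c where "c > 0" "\<And>y. y \<in> M \<Longrightarrow> d y x < c \<Longrightarrow> c \<le> penalized_dist d s y"
    using penalized_dist_bounded_below_near[OF assms] by blast
  with assms(2) show ?thesis
    by fastforce
qed

lemma CBC_regular_inverse_penalized_dist:
  assumes "cofinally_Bourbaki_complete M d" "range s \<subseteq> M" "\<nexists>p. seq_cluster_point M d s p"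
  shows "CBC_regular M d UNIV dist (\<lambda>x. 1 / penalized_dist d s x)"
  unfolding CBC_regular_def
proof (intro conjI allI impI)
  fix t assume t: "cofinally_Bourbaki_Cauchy M d t"
  then have "range t \<subseteq> M"
    unfolding cofinally_Bourbaki_Cauchy_def by simp
  obtain q where q: "seq_cluster_point M d t q"
    using assms(1) t unfolding cofinally_Bourbaki_complete_def by blast
  then have "q \<in> M"
    unfolding seq_cluster_point_def by simp
  then obtain c where c: "c > 0" "\<And>x. x \<in> M \<Longrightarrow> d x q < c \<Longrightarrow> c \<le> penalized_dist d s x"
    using penalized_dist_bounded_below_near assms(2,3) by metis
  have "infinite {n. d (t n) q < c}"
    using q c(1) unfolding seq_cluster_point_def by blast
  moreover have "norm (1 / penalized_dist d s (t n)) \<le> 1 / c" if "d (t n) q < c" for n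
  proof -
    have "c \<le> penalized_dist d s (t n)"
      using c(2) that \<open>range t \<subseteq> M\<close> by auto
    with c(1) show ?thesis
      by (simp add: frac_le)
  qed
  then have "{n. d (t n) q < c} \<subseteq> {n. norm (((\<lambda>x. 1 / penalized_dist d s x) \<circ> t) n) \<le> 1 / c}"
    by auto
  ultimately show "cofinally_Bourbaki_Cauchy UNIV dist ((\<lambda>x. 1 / penalized_dist d s x) \<circ> t)"
    unfolding cofinally_Bourbaki_Cauchy_normed_iff using infinite_super by blast
qed simp

lemma not_cofinally_Bourbaki_Cauchy_inverse_penalized_dist:
  assumes "range s \<subseteq> M" "\<nexists>p. seq_cluster_point M d s p"
  shows "\<not> cofinally_Bourbaki_Cauchy UNIV dist ((\<lambda>x. 1 / penalized_dist d s x) \<circ> s)"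
proof -
  have grows: "real (Suc n) \<le> norm (((\<lambda>x. 1 / penalized_dist d s x) \<circ> s) n)" for n
  proof -
    have "0 < penalized_dist d s (s n)" "penalized_dist d s (s n) \<le> 1 / real (Suc n)"
      using assms penalized_dist_pos penalized_dist_seq_le[of s n] by auto
    then show ?thesis
      by (simp add: le_divide_eq mult.commute pos_le_divide_eq)
  qed
  have "{n. norm (((\<lambda>x. 1 / penalized_dist d s x) \<circ> s) n) \<le> B} \<subseteq> {..nat \<lceil>B\<rceil>}" for B
  proof
    fix n assume "n \<in> {n. norm (((\<lambda>x. 1 / penalized_dist d s x) \<circ> s) n) \<le> B}"
    with grows[of n] have "real n \<le> B"
      by simp
    then have "real n \<le> real (nat \<lceil>B\<rceil>)"
      using real_nat_ceiling_ge[of B] by linarith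
    then show "n \<in> {..nat \<lceil>B\<rceil>}"
      by simp
  qed
  then show ?thesis
    unfolding cofinally_Bourbaki_Cauchy_normed_iff by (meson finite_atMost finite_subset)
qed

lemma cofinally_Bourbaki_quasi_complete_if_real_CBC_regular:
  assumes "cofinally_Bourbaki_complete M d"
    and "\<forall>f::'a \<Rightarrow> real. CBC_regular M d UNIV dist f \<longrightarrow>
           (\<forall>s. cofinally_Bourbaki_quasi_Cauchy M d s \<longrightarrow>
                  cofinally_Bourbaki_Cauchy UNIV dist (f \<circ> s))"
  shows "cofinally_Bourbaki_quasi_complete M d"
  unfolding cofinally_Bourbaki_quasi_complete_def
proof (intro allI impI)
  fix s assume s: "cofinally_Bourbaki_quasi_Cauchy M d s"
  then have "range s \<subseteq> M"
    unfolding cofinally_Bourbaki_quasi_Cauchy_def by simp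
  then show "\<exists>p. seq_cluster_point M d s p"
    using assms s CBC_regular_inverse_penalized_dist[OF assms(1) \<open>range s \<subseteq> M\<close>]
      not_cofinally_Bourbaki_Cauchy_inverse_penalized_dist[OF \<open>range s \<subseteq> M\<close>]
    by metis
qed

end

lemma (in Metric_space) cond2_if_cofinally_Bourbaki_quasi_complete:
  assumes "cofinally_Bourbaki_quasi_complete M d"
  shows "cond2 TYPE('b) M d"
  unfolding cond2_def CBC_regular_def
  using assms cofinally_Bourbaki_quasi_complete_imp_complete
    cofinally_Bourbaki_quasi_complete_imp_Cauchy
  by blast

lemma cond2_real_imp_real_CBC_regular:
  assumes "cond2 TYPE(real) M d"
  shows "cofinally_Bourbaki_complete M d \<and>
    (\<forall>f::'a \<Rightarrow> real. CBC_regular M d UNIV dist f \<longrightarrow>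
       (\<forall>s. cofinally_Bourbaki_quasi_Cauchy M d s \<longrightarrow>
              cofinally_Bourbaki_Cauchy UNIV dist (f \<circ> s)))"
  using assms Met_TC.Metric_space_axioms unfolding cond2_def by blast

theorem mainTheorem9:
  fixes X :: "'a set" and d :: "'a \<Rightarrow> 'a \<Rightarrow> real"
  assumes "Metric_space X d"
  shows "(cofinally_Bourbaki_quasi_complete X d \<longrightarrow> cond2 TYPE('b) X d)
       \<and> (cofinally_Bourbaki_quasi_complete X d \<longleftrightarrow> cond2 TYPE(real) X d)
       \<and> (cofinally_Bourbaki_quasi_complete X d \<longleftrightarrow>
            (cofinally_Bourbaki_complete X d \<and>
             (\<forall>f::'a \<Rightarrow> real. CBC_regular X d UNIV dist f \<longrightarrow>
                (\<forall>s. cofinally_Bourbaki_quasi_Cauchy X d s \<longrightarrow>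
                       cofinally_Bourbaki_Cauchy UNIV dist (f \<circ> s)))))
       \<and> (cofinally_Bourbaki_quasi_complete X d \<longleftrightarrow>
            (cofinally_Bourbaki_complete X d \<and>
             (\<forall>s. cofinally_Bourbaki_quasi_Cauchy X d s \<longrightarrow> cofinally_Bourbaki_Cauchy X d s)))"
proof -
  note quasi_complete_imp_cond2 =
    Metric_space.cond2_if_cofinally_Bourbaki_quasi_complete[OF assms]
  note real_maps_imp_quasi_complete =
    Metric_space.cofinally_Bourbaki_quasi_complete_if_real_CBC_regular[OF assms]
  show ?thesis
    using quasi_complete_imp_cond2 quasi_complete_imp_cond2[where 'b = real]
      cond2_real_imp_real_CBC_regular real_maps_imp_quasi_complete
      Metric_space.cofinally_Bourbaki_quasi_complete_imp_complete[OF assms]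
      cofinally_Bourbaki_quasi_complete_imp_Cauchy
      cofinally_Bourbaki_quasi_complete_if_complete_and_Cauchy
    by metis
qed

end
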